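(* Let $\tau$ be a primitive substitution and $u$ a non-empty prefix of $X_\tau$. Then $\tau$ and $\tau_u$ have the same eigenvalues except perhaps $0$ and roots of unity: a complex number which is neither $0$ nor a root of unity is an eigenvalue of $M_\tau$ if and only if it is an eigenvalue of $M_{\tau_u}$.
   Context: A substitution is a triple $(\tau,A,a)$: $A$ a finite alphabet, $\tau:A\to A^+$ a morphism (extended by concatenation), $a\in A$ with $\tau(a)$ starting with $a$; its fixed point $X_\tau$ is the unique sequence starting with $a$ with $\tau(X_\tau)=X_\tau$. Its matrix $M_\tau$ has $(i,j)$ entry the number of occurrences of $i$ in $\tau(j)$. $\tau$ is primitive if some power of $M_\tau$ is positive; then $X_\tau$ is uniformly recurrent. For a non-empty prefix $u$ of $X_\tau$, a return word on $u$ is a factor $X_{[i,j-1]}$ where $i<j$ are successive occurrences of $u$; there are finitely many, and $X_\tau$ factors uniquely as a concatenation of return words. Enumerating return words in order of first appearance gives a bijection $\Theta_u$ from $R_u=\{1,\dots,N\}$ to the return words, extended to an injective morphism $R_u^*\to A^*$. The return substitution $\tau_u:R_u\to R_u^+$ is the unique morphism with $\Theta_u\tau_u=\tau\Theta_u$. *)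

theory Defs
  imports Complex_Main "HOL-Library.Infinite_Set"
begin

definition subst_word :: "('a \<Rightarrow> 'b list) \<Rightarrow> 'a list \<Rightarrow> 'b list" where
  "subst_word \<tau> w = concat (map \<tau> w)"

text \<open>The fixed point X_tau starting with a: its n-th letter is read off tau^(n+1)(a),
  which is a prefix of X_tau of length at least n+1 when tau(a) = a v with v non-empty.\<close>
definition fixpt :: "('a \<Rightarrow> 'a list) \<Rightarrow> 'a \<Rightarrow> nat \<Rightarrow> 'a" where
  "fixpt \<tau> a n = ((subst_word \<tau> ^^ Suc n) [a]) ! n"

definition subst_matrix :: "('a \<Rightarrow> 'a list) \<Rightarrow> 'a \<Rightarrow> 'a \<Rightarrow> nat" where
  "subst_matrix \<tau> i j = count_list (\<tau> j) i"

definition mat_mult :: "'i set \<Rightarrow> ('i \<Rightarrow> 'i \<Rightarrow> nat) \<Rightarrow> ('i \<Rightarrow> 'i \<Rightarrow> nat) \<Rightarrow> 'i \<Rightarrow> 'i \<Rightarrow> nat" where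
  "mat_mult S M N i j = (\<Sum>k\<in>S. M i k * N k j)"

fun mat_pow :: "'i set \<Rightarrow> ('i \<Rightarrow> 'i \<Rightarrow> nat) \<Rightarrow> nat \<Rightarrow> 'i \<Rightarrow> 'i \<Rightarrow> nat" where
  "mat_pow S M 0 = (\<lambda>i j. if i = j then 1 else 0)"
| "mat_pow S M (Suc k) = mat_mult S (mat_pow S M k) M"

definition primitive_mat :: "'i set \<Rightarrow> ('i \<Rightarrow> 'i \<Rightarrow> nat) \<Rightarrow> bool" where
  "primitive_mat S M \<longleftrightarrow> (\<exists>k. \<forall>i\<in>S. \<forall>j\<in>S. mat_pow S M k i j > 0)"

definition is_eigenvalue :: "'i set \<Rightarrow> ('i \<Rightarrow> 'i \<Rightarrow> nat) \<Rightarrow> complex \<Rightarrow> bool" where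
  "is_eigenvalue S M z \<longleftrightarrow>
     (\<exists>v :: 'i \<Rightarrow> complex. (\<exists>i\<in>S. v i \<noteq> 0) \<and>
        (\<forall>i\<in>S. (\<Sum>j\<in>S. of_nat (M i j) * v j) = z * v i))"

definition root_of_unity :: "complex \<Rightarrow> bool" where
  "root_of_unity z \<longleftrightarrow> (\<exists>n>0. z ^ n = 1)"

definition occurs_at :: "(nat \<Rightarrow> 'a) \<Rightarrow> nat \<Rightarrow> nat \<Rightarrow> bool" where
  "occurs_at X m i \<longleftrightarrow> (\<forall>k<m. X (i + k) = X k)"

definition occ :: "(nat \<Rightarrow> 'a) \<Rightarrow> nat \<Rightarrow> nat \<Rightarrow> nat" where
  "occ X m k = enumerate {i. occurs_at X m i} k"

definition ret_word :: "(nat \<Rightarrow> 'a) \<Rightarrow> nat \<Rightarrow> nat \<Rightarrow> 'a list" where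
  "ret_word X m k = map X [occ X m k ..< occ X m (Suc k)]"

definition first_apps :: "(nat \<Rightarrow> 'a) \<Rightarrow> nat \<Rightarrow> nat set" where
  "first_apps X m = {k. \<forall>l<k. ret_word X m l \<noteq> ret_word X m k}"

text \<open>Number N of return words; R_u = {1..N}.\<close>
definition num_ret :: "(nat \<Rightarrow> 'a) \<Rightarrow> nat \<Rightarrow> nat" where
  "num_ret X m = card (range (ret_word X m))"

definition Theta :: "(nat \<Rightarrow> 'a) \<Rightarrow> nat \<Rightarrow> nat \<Rightarrow> 'a list" where
  "Theta X m r = ret_word X m (sorted_list_of_set (first_apps X m) ! (r - 1))"

text \<open>Return substitution tau_u: the unique morphism R_u \<rightarrow> R_u^+ with
  Theta_u \<circ> tau_u = tau \<circ> Theta_u.\<close>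
definition return_subst :: "('a \<Rightarrow> 'a list) \<Rightarrow> (nat \<Rightarrow> 'a) \<Rightarrow> nat \<Rightarrow> nat \<Rightarrow> nat list" where
  "return_subst \<tau> X m r =
     (THE ws. ws \<noteq> [] \<and> set ws \<subseteq> {1..num_ret X m} \<and>
              subst_word (Theta X m) ws = subst_word \<tau> (Theta X m r))"

end

theory Submission
  imports Defs "Jordan_Normal_Form.Determinant"
begin

text \<open>
  Eigenvectors are transported through the coding \<Theta>_u, using \<Theta>_u \<circ> \<tau>_u = \<tau> \<circ> \<Theta>_u.

  A left eigenvector f of M_\<tau> gives the left eigenvector r \<mapsto> f(\<Theta>_u r) of M_{\<tau>_u}, where f is
  extended additively to words. It is non-zero: otherwise the f-weight of the prefix X[0,i) only
  depends on the short word between i and the last occurrence of u before i, so it takes finitely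
  many values, while \<tau> multiplies it by z; as z is neither 0 nor a root of unity, f = 0.

  A right eigenvector v of M_{\<tau>_u} gives the vector b \<mapsto> \<Sum>_r |\<Theta>_u r|_b v_r, which is an eigenvector
  of M_\<tau> unless it vanishes. In that case the analogous counts x of bigrams satisfy z x = \<sigma>_* x for
  a self-map \<sigma> of the finite set of bigrams, whence x = 0. But for large k, whether a return word
  starts at some position of \<tau>^k(X) is decided inside the \<tau>^k-images of two consecutive letters,
  so z^k v is a combination of the bigram counts x, and v = 0.
\<close>

section \<open>Words, letter counts and roots of unity\<close>

lemma subst_word_Nil [simp]: "subst_word t [] = []"
  by (simp add: subst_word_def)

lemma subst_word_Cons [simp]: "subst_word t (x # xs) = t x @ subst_word t xs"
  by (simp add: subst_word_def)

lemma subst_word_append [simp]: "subst_word t (xs @ ys) = subst_word t xs @ subst_word t ys"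
  by (simp add: subst_word_def)

lemma funpow_subst_word_Nil [simp]: "(subst_word (t :: 'a \<Rightarrow> 'a list) ^^ k) [] = []"
  by (induction k) auto

lemma funpow_subst_word_append [simp]:
  "(subst_word (t :: 'a \<Rightarrow> 'a list) ^^ k) (xs @ ys) = (subst_word t ^^ k) xs @ (subst_word t ^^ k) ys"
  by (induction k) auto

lemma funpow_subst_word:
  "(subst_word (t :: 'a \<Rightarrow> 'a list) ^^ k) w = subst_word (\<lambda>x. (subst_word t ^^ k) [x]) w"
proof (induction w)
  case (Cons x w)
  then show ?case using funpow_subst_word_append[where t=t and k=k and xs="[x]" and ys=w] by simp
qed simp

lemma funpow_subst_word_Suc_single: "(subst_word t ^^ Suc k) [x] = (subst_word t ^^ k) (t x)"
  by (simp add: funpow_Suc_right del: funpow.simps)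

lemma sum_list_map_eq_sum_of_nat_count:
  fixes f :: "'b \<Rightarrow> 'c::comm_semiring_1"
  assumes "finite S" "set w \<subseteq> S"
  shows "sum_list (map f w) = (\<Sum>l\<in>S. of_nat (count_list w l) * f l)"
  using assms(2)
proof (induction w)
  case (Cons x w)
  have "(\<Sum>l\<in>S. of_nat (count_list (x # w) l) * f l)
      = (\<Sum>l\<in>S. (if x = l then f l else 0) + of_nat (count_list w l) * f l)"
    by (rule sum.cong) (auto simp: distrib_right)
  also have "\<dots> = f x + (\<Sum>l\<in>S. of_nat (count_list w l) * f l)"
    using Cons.prems assms(1) by (simp add: sum.distrib sum.delta)
  finally show ?case using Cons by simp
qed simp

lemma count_list_concat_map:
  assumes "finite S" "set w \<subseteq> S"
  shows "count_list (concat (map h w)) i = (\<Sum>l\<in>S. count_list w l * count_list (h l) i)"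
  using sum_list_map_eq_sum_of_nat_count[OF assms, of "\<lambda>l. count_list (h l) i"]
  by (simp add: count_list_concat comp_def)

lemma count_list_map_eq_sum_preimage:
  fixes w :: "'b::finite list"
  shows "count_list (map g w) p = (\<Sum>q | g q = p. count_list w q)"
proof (induction w)
  case (Cons x w)
  have "(\<Sum>q | g q = p. count_list (x # w) q) = (\<Sum>q | g q = p. (if x = q then 1 else 0) + count_list w q)"
    by (rule sum.cong) auto
  then show ?case using Cons by (simp add: sum.distrib sum.delta)
qed simp

lemma count_list_map_upt: "count_list (map f [k1..<k2]) x = card {t\<in>{k1..<k2}. f t = x}"
  by (simp add: count_list_eq_length_filter filter_map comp_def distinct_length_filter
      Int_def conj_commute eq_commute)

lemma card_split_mono_intervals:
  fixes S :: "nat \<Rightarrow> nat"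
  assumes "mono S" "i1 \<le> i2"
  shows "card {q. S i1 \<le> q \<and> q < S i2 \<and> P q} = (\<Sum>i\<in>{i1..<i2}. card {q. S i \<le> q \<and> q < S (Suc i) \<and> P q})"
  using assms(2)
proof (induction i2 rule: dec_induct)
  case (step k)
  have "S i1 \<le> S k" "S k \<le> S (Suc k)" using assms(1) step(1) by (auto simp: mono_def)
  then have "{q. S i1 \<le> q \<and> q < S (Suc k) \<and> P q}
      = {q. S i1 \<le> q \<and> q < S k \<and> P q} \<union> {q. S k \<le> q \<and> q < S (Suc k) \<and> P q}"
    by auto
  moreover have "card \<dots> = card {q. S i1 \<le> q \<and> q < S k \<and> P q} + card {q. S k \<le> q \<and> q < S (Suc k) \<and> P q}"
    by (rule card_Un_disjoint) auto
  ultimately show ?case using step by simp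
qed simp

lemma strict_mono_interval_cover:
  fixes f :: "nat \<Rightarrow> nat"
  assumes "strict_mono f" "f 0 = 0"
  shows "\<exists>i. f i \<le> x \<and> x < f (Suc i)"
proof -
  have "x < f (Suc x)" using strict_mono_imp_increasing[OF assms(1), of "Suc x"] by simp
  then have ex: "\<exists>i. x < f (Suc i)" by blast
  define i where "i = (LEAST i. x < f (Suc i))"
  have "x < f (Suc i)" unfolding i_def by (rule LeastI_ex[OF ex])
  moreover have "f i \<le> x"
  proof (cases i)
    case (Suc j)
    then show ?thesis using not_less_Least[of j "\<lambda>i. x < f (Suc i)"] i_def by simp
  qed (use assms(2) in simp)
  ultimately show ?thesis by blast
qed

lemma inj_power_if_not_root_of_unity:
  fixes z :: complex
  assumes "z \<noteq> 0" "\<not> root_of_unity z"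
  shows "inj ((^) z)"
proof -
  have "z ^ i \<noteq> z ^ j" if "i < j" for i j
  proof
    assume "z ^ i = z ^ j"
    moreover have "z ^ j = z ^ i * z ^ (j - i)" using that by (simp flip: power_add)
    ultimately have "z ^ i * z ^ (j - i) = z ^ i * 1" by simp
    then have "z ^ (j - i) = 1" using assms(1) by simp
    then show False using that assms(2) unfolding root_of_unity_def by (metis zero_less_diff)
  qed
  then show ?thesis by (metis injI linorder_neqE_nat)
qed

lemma power_mult_in_finite_set_imp_zero:
  fixes z c :: complex
  assumes "finite V" "\<And>n. z ^ n * c \<in> V" "z \<noteq> 0" "\<not> root_of_unity z"
  shows "c = 0"
proof (rule ccontr)
  assume "c \<noteq> 0"
  then have "inj (\<lambda>n. z ^ n * c)"
    using inj_power_if_not_root_of_unity[OF assms(3,4)] by (simp add: inj_def)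
  then have "infinite (range (\<lambda>n. z ^ n * c))" by (rule range_inj_infinite)
  moreover have "range (\<lambda>n. z ^ n * c) \<subseteq> V" using assms(2) by auto
  ultimately show False using assms(1) finite_subset by blast
qed

lemma pushforward_eigenvector_eq_0:
  fixes \<sigma> :: "'b::finite \<Rightarrow> 'b" and x :: "'b \<Rightarrow> complex"
  assumes eigen: "\<And>p. z * x p = (\<Sum>q | \<sigma> q = p. x q)"
    and "z \<noteq> 0" "\<not> root_of_unity z"
  shows "x p = 0"
proof -
  have iterate: "z ^ n * x p = (\<Sum>q | (\<sigma> ^^ n) q = p. x q)" for n p
  proof (induction n arbitrary: p)
    case (Suc n)
    have "z ^ Suc n * x p = z ^ n * (z * x p)" by (simp add: mult_ac)
    also have "\<dots> = (\<Sum>q | \<sigma> q = p. z ^ n * x q)" by (simp add: eigen sum_distrib_left)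
    also have "\<dots> = (\<Sum>q | \<sigma> q = p. \<Sum>r | (\<sigma> ^^ n) r = q. x r)" using Suc by simp
    also have "\<dots> = (\<Sum>r\<in>(\<Union>q\<in>{q. \<sigma> q = p}. {r. (\<sigma> ^^ n) r = q}). x r)"
      by (rule sum.UNION_disjoint[symmetric]) auto
    also have "(\<Union>q\<in>{q. \<sigma> q = p}. {r. (\<sigma> ^^ n) r = q}) = {r. (\<sigma> ^^ Suc n) r = p}"
      by auto
    finally show ?case .
  qed simp
  obtain i j where "i \<noteq> j" "\<sigma> ^^ i = \<sigma> ^^ j"
    using range_inj_infinite[of "\<lambda>n. \<sigma> ^^ n"] unfolding inj_def by auto
  then have "z ^ i * x p = z ^ j * x p" "z ^ i \<noteq> z ^ j"
    using iterate inj_power_if_not_root_of_unity[OF assms(2,3)] by (auto simp: inj_def)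
  then show ?thesis by simp
qed

section \<open>Left and right eigenvectors\<close>

lemma reindexed_mat_mult_vec_eq_0_iff:
  fixes K :: "'i \<Rightarrow> 'i \<Rightarrow> 'c::comm_semiring_0"
  assumes e: "bij_betw e {..<n} S"
  shows "mat n n (\<lambda>(i, j). K (e i) (e j)) *\<^sub>v vec n (\<lambda>i. v (e i)) = 0\<^sub>v n
    \<longleftrightarrow> (\<forall>i\<in>S. (\<Sum>j\<in>S. K i j * v j) = 0)"
proof -
  let ?A = "mat n n (\<lambda>(i, j). K (e i) (e j))"
  let ?w = "vec n (\<lambda>i. v (e i))"
  have S_eq: "S = e ` {..<n}" using e by (simp add: bij_betw_def)
  have entry: "(?A *\<^sub>v ?w) $ l = (\<Sum>j\<in>S. K (e l) j * v j)" if "l < n" for l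
  proof -
    have "(?A *\<^sub>v ?w) $ l = (\<Sum>j<n. K (e l) (e j) * v (e j))"
      using that by (simp add: scalar_prod_def row_def atLeast0LessThan)
    also have "\<dots> = (\<Sum>j\<in>S. K (e l) j * v j)"
      using sum.reindex_bij_betw[OF e, of "\<lambda>j. K (e l) j * v j"] by simp
    finally show ?thesis .
  qed
  have "(\<forall>i\<in>S. (\<Sum>j\<in>S. K i j * v j) = 0) \<longleftrightarrow> (\<forall>l\<in>{..<n}. (\<Sum>j\<in>S. K (e l) j * v j) = 0)"
    using Ball_image_comp[of e "{..<n}" "\<lambda>i. (\<Sum>j\<in>S. K i j * v j) = 0"] S_eq
    by (simp add: comp_def)
  also have "\<dots> \<longleftrightarrow> ?A *\<^sub>v ?w = 0\<^sub>v n"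
  proof
    assume zero: "\<forall>l\<in>{..<n}. (\<Sum>j\<in>S. K (e l) j * v j) = 0"
    show "?A *\<^sub>v ?w = 0\<^sub>v n"
    proof (rule eq_vecI)
      fix l assume "l < dim_vec (0\<^sub>v n :: 'c vec)"
      then have "l < n" by simp
      have "(?A *\<^sub>v ?w) $ l = (\<Sum>j\<in>S. K (e l) j * v j)" by (rule entry[OF \<open>l < n\<close>])
      also have "\<dots> = 0" using zero \<open>l < n\<close> by simp
      also have "\<dots> = 0\<^sub>v n $ l" using \<open>l < n\<close> by simp
      finally show "(?A *\<^sub>v ?w) $ l = 0\<^sub>v n $ l" .
    qed simp
  next
    assume zero: "?A *\<^sub>v ?w = 0\<^sub>v n"
    show "\<forall>l\<in>{..<n}. (\<Sum>j\<in>S. K (e l) j * v j) = 0"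
    proof
      fix l assume "l \<in> {..<n}"
      then have "l < n" by simp
      have "(\<Sum>j\<in>S. K (e l) j * v j) = (?A *\<^sub>v ?w) $ l" by (rule entry[OF \<open>l < n\<close>, symmetric])
      also have "\<dots> = 0" unfolding zero using \<open>l < n\<close> by simp
      finally show "(\<Sum>j\<in>S. K (e l) j * v j) = 0" .
    qed
  qed
  finally show ?thesis by simp
qed

lemma nontrivial_kernel_iff_det_eq_0:
  fixes K :: "'i \<Rightarrow> 'i \<Rightarrow> 'c::idom"
  assumes e: "bij_betw e {..<n} S"
  shows "(\<exists>v. (\<exists>i\<in>S. v i \<noteq> 0) \<and> (\<forall>i\<in>S. (\<Sum>j\<in>S. K i j * v j) = 0))
     \<longleftrightarrow> det (mat n n (\<lambda>(i, j). K (e i) (e j))) = 0"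
proof -
  let ?A = "mat n n (\<lambda>(i, j). K (e i) (e j))"
  let ?vec = "\<lambda>v. vec n (\<lambda>i. v (e i))"
  have nonzero: "(\<exists>i\<in>S. v i \<noteq> 0) \<longleftrightarrow> ?vec v \<noteq> 0\<^sub>v n" for v
    using e by (auto simp: bij_betw_def vec_eq_iff)
  have vec_onto: "?vec (\<lambda>x. w $ inv_into {..<n} e x) = w" if "w \<in> carrier_vec n" for w :: "'c vec"
    using that e by (auto simp: vec_eq_iff bij_betw_inv_into_left)
  have "(\<exists>v. (\<exists>i\<in>S. v i \<noteq> 0) \<and> (\<forall>i\<in>S. (\<Sum>j\<in>S. K i j * v j) = 0))
      \<longleftrightarrow> (\<exists>w. w \<in> carrier_vec n \<and> w \<noteq> 0\<^sub>v n \<and> ?A *\<^sub>v w = 0\<^sub>v n)"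
    unfolding nonzero reindexed_mat_mult_vec_eq_0_iff[OF e, symmetric]
  proof
    assume "\<exists>v. ?vec v \<noteq> 0\<^sub>v n \<and> ?A *\<^sub>v ?vec v = 0\<^sub>v n"
    then show "\<exists>w. w \<in> carrier_vec n \<and> w \<noteq> 0\<^sub>v n \<and> ?A *\<^sub>v w = 0\<^sub>v n"
      using vec_carrier by blast
  next
    assume "\<exists>w. w \<in> carrier_vec n \<and> w \<noteq> 0\<^sub>v n \<and> ?A *\<^sub>v w = 0\<^sub>v n"
    then obtain w where w: "w \<in> carrier_vec n" "w \<noteq> 0\<^sub>v n" "?A *\<^sub>v w = 0\<^sub>v n" by blast
    then show "\<exists>v. ?vec v \<noteq> 0\<^sub>v n \<and> ?A *\<^sub>v ?vec v = 0\<^sub>v n"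
      using vec_onto[OF w(1)] by (intro exI[of _ "\<lambda>x. w $ inv_into {..<n} e x"]) simp
  qed
  also have "\<dots> \<longleftrightarrow> det ?A = 0" by (rule det_0_iff_vec_prod_zero[symmetric]) auto
  finally show ?thesis .
qed

lemma nontrivial_kernel_transpose_iff:
  fixes K :: "'i \<Rightarrow> 'i \<Rightarrow> 'c::idom"
  assumes "finite S"
  shows "(\<exists>v. (\<exists>i\<in>S. v i \<noteq> 0) \<and> (\<forall>i\<in>S. (\<Sum>j\<in>S. K i j * v j) = 0))
     \<longleftrightarrow> (\<exists>v. (\<exists>i\<in>S. v i \<noteq> 0) \<and> (\<forall>j\<in>S. (\<Sum>i\<in>S. v i * K i j) = 0))"
proof -
  obtain e where e: "bij_betw e {..<card S} S"
    using assms by (metis atLeast0LessThan ex_bij_betw_nat_finite)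
  let ?A = "mat (card S) (card S) (\<lambda>(i, j). K (e i) (e j))"
  have "mat (card S) (card S) (\<lambda>(i, j). K (e j) (e i)) = transpose_mat ?A"
    by (rule eq_matI) auto
  then have "det (mat (card S) (card S) (\<lambda>(i, j). K (e j) (e i))) = det ?A"
    using det_transpose[of ?A "card S"] by simp
  then show ?thesis
    using nontrivial_kernel_iff_det_eq_0[OF e, of K] nontrivial_kernel_iff_det_eq_0[OF e, of "\<lambda>i j. K j i"]
    by (simp add: mult.commute)
qed

lemma is_eigenvalue_iff_left_eigenvector:
  assumes "finite S"
  shows "is_eigenvalue S M z \<longleftrightarrow>
    (\<exists>f. (\<exists>i\<in>S. f i \<noteq> 0) \<and> (\<forall>j\<in>S. (\<Sum>i\<in>S. f i * of_nat (M i j)) = z * f j))"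
proof -
  define K where "K i j = (of_nat (M i j) :: complex) - (if i = j then z else 0)" for i j
  have "(\<Sum>j\<in>S. K i j * v j) = (\<Sum>j\<in>S. of_nat (M i j) * v j) - z * v i" if "i \<in> S" for i v
    using that assms
    by (simp add: K_def left_diff_distrib sum_subtractf if_distrib[of "\<lambda>x. x * _"] sum.delta cong: if_cong)
  moreover have "(\<Sum>i\<in>S. v i * K i j) = (\<Sum>i\<in>S. v i * of_nat (M i j)) - z * v j" if "j \<in> S" for j v
    using that assms
    by (simp add: K_def right_diff_distrib sum_subtractf if_distrib[of "\<lambda>x. _ * x"] cong: if_cong)
  ultimately show ?thesis
    using nontrivial_kernel_transpose_iff[OF assms, of K] unfolding is_eigenvalue_def
    by (simp add: mult.commute)
qed

section \<open>Weighted letter counts and bigrams\<close>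

definition weighted_count :: "'i set \<Rightarrow> ('i \<Rightarrow> complex) \<Rightarrow> ('i \<Rightarrow> 'b list) \<Rightarrow> 'b \<Rightarrow> complex" where
  "weighted_count S v \<Phi> p = (\<Sum>j\<in>S. of_nat (count_list (\<Phi> j) p) * v j)"

lemma is_eigenvalue_subst_matrix_iff:
  "is_eigenvalue S (subst_matrix \<sigma>) z \<longleftrightarrow>
     (\<exists>v. (\<exists>i\<in>S. v i \<noteq> 0) \<and> (\<forall>i\<in>S. weighted_count S v \<sigma> i = z * v i))"
  by (simp add: is_eigenvalue_def subst_matrix_def weighted_count_def)

lemma weighted_count_cong:
  "(\<And>j. j \<in> S \<Longrightarrow> \<Phi> j = \<Psi> j) \<Longrightarrow> weighted_count S v \<Phi> p = weighted_count S v \<Psi> p"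
  by (simp add: weighted_count_def)

lemma weighted_count_cong_count:
  "(\<And>j. j \<in> S \<Longrightarrow> count_list (\<Phi> j) p = count_list (\<Psi> j) p) \<Longrightarrow>
    weighted_count S v \<Phi> p = weighted_count S v \<Psi> p"
  by (simp add: weighted_count_def)

lemma count_list_concat_map_snoc:
  "count_list (concat (map (\<lambda>q. g (fst q) @ [\<sigma> q]) L)) p
    = count_list (concat (map g (map fst L)) @ map \<sigma> L) p"
  by (induction L) auto

lemma weighted_count_append:
  "weighted_count S v (\<lambda>j. \<Phi> j @ \<Psi> j) p = weighted_count S v \<Phi> p + weighted_count S v \<Psi> p"
  by (simp add: weighted_count_def distrib_right sum.distrib)

lemma weighted_count_linear:
  fixes \<Psi> :: "'i \<Rightarrow> 'b::finite list"
  assumes "\<And>j. j \<in> S \<Longrightarrow> count_list (\<Phi> j) p = (\<Sum>q\<in>UNIV. count_list (\<Psi> j) q * c q)"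
  shows "weighted_count S v \<Phi> p = (\<Sum>q\<in>UNIV. of_nat (c q) * weighted_count S v \<Psi> q)"
proof -
  have "weighted_count S v \<Phi> p = (\<Sum>j\<in>S. \<Sum>q\<in>UNIV. of_nat (c q) * (of_nat (count_list (\<Psi> j) q) * v j))"
    unfolding weighted_count_def using assms by (simp add: sum_distrib_left sum_distrib_right mult_ac)
  also have "\<dots> = (\<Sum>q\<in>UNIV. of_nat (c q) * weighted_count S v \<Psi> q)"
    unfolding weighted_count_def by (subst sum.swap) (simp add: sum_distrib_left)
  finally show ?thesis .
qed

lemma weighted_count_concat_map:
  fixes \<Psi> :: "'i \<Rightarrow> 'b::finite list"
  shows "weighted_count S v (\<lambda>j. concat (map g (\<Psi> j))) p
    = (\<Sum>q\<in>UNIV. of_nat (count_list (g q) p) * weighted_count S v \<Psi> q)"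
  by (rule weighted_count_linear) (simp add: count_list_concat_map[of UNIV])

lemma weighted_count_map:
  fixes \<Phi> :: "'i \<Rightarrow> 'b::finite list"
  shows "weighted_count S v (\<lambda>j. map \<sigma> (\<Phi> j)) p = (\<Sum>q | \<sigma> q = p. weighted_count S v \<Phi> q)"
  unfolding weighted_count_def
  by (simp add: count_list_map_eq_sum_preimage sum_distrib_right) (rule sum.swap)

lemma weighted_count_compose_eigenvector:
  assumes "finite S" "\<And>j. j \<in> S \<Longrightarrow> set (\<sigma> j) \<subseteq> S"
    and eigen: "\<And>i. i \<in> S \<Longrightarrow> weighted_count S v \<sigma> i = z * v i"
  shows "weighted_count S v (\<lambda>j. concat (map \<Psi> (\<sigma> j))) p = z * weighted_count S v \<Psi> p"
proof -
  have "weighted_count S v (\<lambda>j. concat (map \<Psi> (\<sigma> j))) p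
      = (\<Sum>j\<in>S. \<Sum>r\<in>S. of_nat (count_list (\<Psi> r) p) * (of_nat (count_list (\<sigma> j) r) * v j))"
    unfolding weighted_count_def using assms(1,2)
    by (intro sum.cong) (simp_all add: count_list_concat_map[of S] sum_distrib_left sum_distrib_right mult_ac)
  also have "\<dots> = (\<Sum>r\<in>S. of_nat (count_list (\<Psi> r) p) * weighted_count S v \<sigma> r)"
    unfolding weighted_count_def by (subst sum.swap) (simp add: sum_distrib_left)
  also have "\<dots> = (\<Sum>r\<in>S. of_nat (count_list (\<Psi> r) p) * (z * v r))" using eigen by simp
  also have "\<dots> = z * weighted_count S v \<Psi> p"
    unfolding weighted_count_def by (simp add: sum_distrib_left mult_ac)
  finally show ?thesis .
qed

lemma sum_list_subst_word_left_eigenvector: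
  fixes t :: "'a::finite \<Rightarrow> 'a list" and f :: "'a \<Rightarrow> complex"
  assumes "\<And>j. (\<Sum>i\<in>UNIV. f i * of_nat (subst_matrix t i j)) = z * f j"
  shows "sum_list (map f (subst_word t w)) = z * sum_list (map f w)"
proof (induction w)
  case (Cons x w)
  have "sum_list (map f (t x)) = (\<Sum>i\<in>UNIV. of_nat (count_list (t x) i) * f i)"
    by (rule sum_list_map_eq_sum_of_nat_count) auto
  also have "\<dots> = z * f x" using assms[of x] by (simp add: subst_matrix_def mult.commute)
  finally show ?case using Cons by (simp add: distrib_left)
qed simp

definition bigrams :: "'b list \<Rightarrow> 'b \<Rightarrow> ('b \<times> 'b) list" where
  "bigrams w c = zip w (tl w @ [c])"

lemma bigrams_Nil [simp]: "bigrams [] c = []"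
  by (simp add: bigrams_def)

lemma bigrams_single: "bigrams [x] c = [(x, c)]"
  by (simp add: bigrams_def)

lemma bigrams_Cons_Cons: "bigrams (x # y # ys) c = (x, y) # bigrams (y # ys) c"
  by (simp add: bigrams_def)

lemma map_fst_bigrams: "map fst (bigrams w c) = w"
  by (cases w) (simp_all add: bigrams_def)

lemma bigrams_append: "w' \<noteq> [] \<Longrightarrow> bigrams (w @ w') c = bigrams w (hd w') @ bigrams w' c"
proof (induction w)
  case (Cons x w)
  then show ?case
    by (cases w; cases w') (simp_all add: bigrams_Cons_Cons bigrams_single)
qed simp

lemma bigrams_snoc: "w \<noteq> [] \<Longrightarrow> bigrams w c = zip (butlast w) (tl w) @ [(last w, c)]"
  by (induction w rule: induct_list012) (simp_all add: bigrams_Cons_Cons bigrams_single)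

lemma bigrams_concat:
  assumes "\<forall>r\<in>set ws. \<exists>ys. g r = c # ys"
  shows "bigrams (concat (map g ws)) c = concat (map (\<lambda>r. bigrams (g r) c) ws)"
  using assms
proof (induction ws)
  case (Cons r ws)
  show ?case
  proof (cases ws)
    case (Cons r' ws')
    then obtain ys where "g r' = c # ys" using Cons.prems by auto
    then show ?thesis using Cons Cons.IH Cons.prems by (simp add: bigrams_append)
  qed simp
qed simp

lemma bigrams_subst_word:
  assumes "\<forall>b. t b \<noteq> []"
  shows "bigrams (subst_word t w) (hd (t c))
    = concat (map (\<lambda>q. bigrams (t (fst q)) (hd (t (snd q)))) (bigrams w c))"
proof (induction w)
  case (Cons x w)
  show ?case
  proof (cases w)
    case (Cons y ys)
    then have "subst_word t w \<noteq> []" "hd (subst_word t w) = hd (t y)" using assms by auto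
    then show ?thesis using Cons.IH Cons by (simp add: bigrams_append bigrams_Cons_Cons)
  qed (simp add: bigrams_single)
qed simp

section \<open>The fixed point of a primitive substitution\<close>

locale primitive_fixed_point =
  fixes \<tau> :: "'a::finite \<Rightarrow> 'a list" and a :: 'a
  assumes nonerasing: "\<forall>b. \<tau> b \<noteq> []"
    and starts: "hd (\<tau> a) = a"
    and growing: "2 \<le> length (\<tau> a)"
    and primitive: "primitive_mat UNIV (subst_matrix \<tau>)"
begin

abbreviation subst :: "'a list \<Rightarrow> 'a list" where
  "subst \<equiv> subst_word \<tau>"

abbreviation X :: "nat \<Rightarrow> 'a" where
  "X \<equiv> fixpt \<tau> a"

definition W :: "nat \<Rightarrow> 'a list" where
  "W n = (subst ^^ n) [a]"

definition factor :: "nat \<Rightarrow> nat \<Rightarrow> 'a list" where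
  "factor i j = map X [i..<j]"

text \<open>Since \<tau>(X[0,i)) is again a prefix of X, it ends at position block_start i,
  and \<tau>(X i) occupies X[block_start i, block_start (i+1)).\<close>
definition block_start :: "nat \<Rightarrow> nat" where
  "block_start i = length (subst (factor 0 i))"

lemma length_le_length_subst: "length w \<le> length (subst w)"
proof (induction w)
  case (Cons x w)
  have "\<tau> x \<noteq> []" using nonerasing by auto
  then show ?case using Cons by (cases "\<tau> x") auto
qed simp

lemma length_le_length_funpow_subst: "length w \<le> length ((subst ^^ k) w)"
  by (induction k) (auto intro: order_trans[OF _ length_le_length_subst])

lemma funpow_subst_single_nonempty: "(subst ^^ k) [x] \<noteq> []"
  using length_le_length_funpow_subst[of "[x]" k] by auto

lemma W_Suc: "W (Suc n) = subst (W n)"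
  by (simp add: W_def)

lemma W_Suc_prefix: "\<exists>ys. W (Suc n) = W n @ ys"
proof (induction n)
  case 0
  have "\<tau> a = a # tl (\<tau> a)" using starts nonerasing by (metis list.collapse)
  then show ?case by (simp add: W_def) (metis append_Cons append_Nil)
next
  case (Suc n)
  then obtain ys where "W (Suc n) = W n @ ys" by blast
  then have "W (Suc (Suc n)) = W (Suc n) @ subst ys" by (simp add: W_Suc)
  then show ?case by blast
qed

lemma W_prefix_mono: "n \<le> n' \<Longrightarrow> \<exists>ys. W n' = W n @ ys"
proof (induction n' rule: dec_induct)
  case (step k)
  then show ?case using W_Suc_prefix[of k] by (metis append.assoc)
qed simp

lemma W_Cons: "\<exists>ys. W n = a # ys"
  using W_prefix_mono[of 0 n] by (auto simp: W_def)

lemma length_W: "n + 1 \<le> length (W n)"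
proof (induction n)
  case (Suc n)
  obtain ys where ys: "W n = a # ys" using W_Cons by blast
  have "length (subst (a # ys)) = length (\<tau> a) + length (subst ys)" by simp
  also have "\<dots> \<ge> 2 + length ys" using growing length_le_length_subst[of ys] by simp
  finally show ?case using Suc ys by (simp add: W_Suc)
qed (simp add: W_def)

lemma X_eq_nth_W: "i < length (W n) \<Longrightarrow> X i = W n ! i"
proof -
  assume i: "i < length (W n)"
  have x: "X i = W (Suc i) ! i" by (simp add: fixpt_def W_def)
  have l: "i < length (W (Suc i))" using length_W[of "Suc i"] by simp
  obtain ys1 where "W (max n (Suc i)) = W n @ ys1" using W_prefix_mono[of n "max n (Suc i)"] by auto
  moreover obtain ys2 where "W (max n (Suc i)) = W (Suc i) @ ys2"
    using W_prefix_mono[of "Suc i" "max n (Suc i)"] by auto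
  ultimately show ?thesis using i l x by (metis nth_append)
qed

lemma X_0: "X 0 = a"
  using X_eq_nth_W[of 0 0] by (simp add: W_def)

lemma nth_factor: "t < j - i \<Longrightarrow> factor i j ! t = X (i + t)"
  by (simp add: factor_def)

lemma length_factor [simp]: "length (factor i j) = j - i"
  by (simp add: factor_def)

lemma factor_empty [simp]: "factor i i = []"
  by (simp add: factor_def)

lemma factor_Suc: "factor i (Suc i) = [X i]"
  by (simp add: factor_def)

lemma factor_append: "i \<le> j \<Longrightarrow> j \<le> l \<Longrightarrow> factor i j @ factor j l = factor i l"
  unfolding factor_def by (metis le_Suc_ex map_append upt_add_eq_append)

lemma take_factor_0: "k \<le> l \<Longrightarrow> take k (factor 0 l) = factor 0 k"
  by (simp add: factor_def take_map)

lemma take_factor: "k \<le> j - i \<Longrightarrow> take k (factor i j) = factor i (i + k)"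
  by (cases "i \<le> j") (simp_all add: factor_def take_map take_upt)

lemma drop_factor_0: "k \<le> l \<Longrightarrow> drop k (factor 0 l) = factor k l"
  by (simp add: factor_def drop_map)

lemma W_eq_factor: "W n = factor 0 (length (W n))"
  by (rule nth_equalityI) (auto simp: nth_factor X_eq_nth_W)

lemma factor_0_eq_take_W: "i \<le> length (W n) \<Longrightarrow> factor 0 i = take i (W n)"
  by (metis W_eq_factor take_factor_0)

lemma subst_factor_0: "subst (factor 0 i) = factor 0 (block_start i)"
proof -
  have i: "i \<le> length (W i)" using length_W[of i] by simp
  then have "W (Suc i) = subst (factor 0 i) @ subst (drop i (W i))"
    using factor_0_eq_take_W[OF i] W_Suc by (metis append_take_drop_id subst_word_append)
  then show ?thesis
    using factor_0_eq_take_W[of "block_start i" "Suc i"] by (simp add: block_start_def)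
qed

lemma funpow_subst_factor_0: "(subst ^^ k) (factor 0 i) = factor 0 ((block_start ^^ k) i)"
  by (induction k) (auto simp: subst_factor_0)

lemma funpow_block_start_0: "(block_start ^^ k) 0 = 0"
  using funpow_subst_factor_0[of k 0] by (metis length_0_conv length_factor factor_empty funpow_subst_word_Nil diff_zero)

lemma le_funpow_block_start: "i \<le> (block_start ^^ k) i"
  using length_le_length_funpow_subst[of "factor 0 i" k] by (simp add: funpow_subst_factor_0)

lemma funpow_subst_factor:
  assumes "i \<le> j"
  shows "(subst ^^ k) (factor i j) = factor ((block_start ^^ k) i) ((block_start ^^ k) j)"
    and "(block_start ^^ k) i \<le> (block_start ^^ k) j"
proof -
  have "factor 0 j = factor 0 i @ factor i j" using factor_append[of 0 i j] assms by simp
  then have e: "factor 0 ((block_start ^^ k) j) = factor 0 ((block_start ^^ k) i) @ (subst ^^ k) (factor i j)"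
    by (metis funpow_subst_factor_0 funpow_subst_word_append)
  then show le: "(block_start ^^ k) i \<le> (block_start ^^ k) j"
    by (metis le_add1 length_append length_factor diff_zero)
  show "(subst ^^ k) (factor i j) = factor ((block_start ^^ k) i) ((block_start ^^ k) j)"
    using arg_cong[OF e, of "drop ((block_start ^^ k) i)"] drop_factor_0[OF le] by simp
qed

lemma funpow_subst_single: "(subst ^^ k) [X i] = factor ((block_start ^^ k) i) ((block_start ^^ k) (Suc i))"
  using funpow_subst_factor(1)[of i "Suc i" k] by (simp add: factor_Suc)

lemma strict_mono_funpow_block_start: "strict_mono (block_start ^^ k)"
  unfolding strict_mono_Suc_iff
proof
  fix i
  have "factor ((block_start ^^ k) i) ((block_start ^^ k) (Suc i)) \<noteq> []"
    using funpow_subst_single[of k i] funpow_subst_single_nonempty[of k "X i"] by simp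
  then show "(block_start ^^ k) i < (block_start ^^ k) (Suc i)"
    by (metis length_factor length_greater_0_conv zero_less_diff)
qed

lemma X_funpow_block_start_add:
  "t < length ((subst ^^ k) [X i]) \<Longrightarrow> X ((block_start ^^ k) i + t) = (subst ^^ k) [X i] ! t"
  by (simp add: funpow_subst_single nth_factor)

lemma mat_pow_subst_matrix: "mat_pow UNIV (subst_matrix \<tau>) k i j = count_list ((subst ^^ k) [j]) i"
proof (induction k arbitrary: i j)
  case (Suc k)
  have "mat_pow UNIV (subst_matrix \<tau>) (Suc k) i j
      = (\<Sum>l\<in>UNIV. count_list (\<tau> j) l * count_list ((subst ^^ k) [l]) i)"
    by (simp add: mat_mult_def Suc.IH subst_matrix_def mult.commute)
  also have "\<dots> = count_list (concat (map (\<lambda>x. (subst ^^ k) [x]) (\<tau> j))) i"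
    by (simp add: count_list_concat_map[of UNIV])
  also have "concat (map (\<lambda>x. (subst ^^ k) [x]) (\<tau> j)) = (subst ^^ Suc k) [j]"
    by (metis funpow_subst_word_Suc_single funpow_subst_word subst_word_def)
  finally show ?case .
qed simp

definition k_prim :: nat where
  "k_prim = (SOME k. \<forall>i j. i \<in> set ((subst ^^ k) [j]))"

lemma letter_in_funpow_k_prim: "i \<in> set ((subst ^^ k_prim) [j])"
proof -
  obtain k where "\<forall>i j. mat_pow UNIV (subst_matrix \<tau>) k i j > 0"
    using primitive unfolding primitive_mat_def by blast
  then have "\<forall>i j. i \<in> set ((subst ^^ k) [j])"
    by (simp add: mat_pow_subst_matrix) (metis count_list_0_iff not_gr0)
  then have "\<forall>i j. i \<in> set ((subst ^^ k_prim) [j])" unfolding k_prim_def by (rule someI)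
  then show ?thesis by blast
qed

lemma X_surj: "\<exists>i. X i = b"
proof -
  have "b \<in> set (W k_prim)" using letter_in_funpow_k_prim by (simp add: W_def)
  then have "b \<in> set (factor 0 (length (W k_prim)))" by (metis W_eq_factor)
  then show ?thesis by (auto simp: factor_def)
qed

lemma W_factor_of_funpow_subst: "\<exists>p q. (subst ^^ (n + k_prim)) [c] = p @ W n @ q"
proof -
  obtain xs ys where "(subst ^^ k_prim) [c] = xs @ a # ys"
    using letter_in_funpow_k_prim[of a c] by (meson split_list)
  then have "(subst ^^ (n + k_prim)) [c] = (subst ^^ n) xs @ W n @ (subst ^^ n) ys"
    using funpow_subst_word_append[where t = \<tau> and k = n and xs = "[a]" and ys = ys] by (simp add: funpow_add W_def)
  then show ?thesis by blast
qed

lemma length_funpow_subst_ge: "n + 1 \<le> length ((subst ^^ (n + k_prim)) [c])"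
  using W_factor_of_funpow_subst[of n c] length_W[of n] by auto

end

section \<open>Return words\<close>

locale prefix_return_words = primitive_fixed_point +
  fixes m :: nat
  assumes m_pos: "1 \<le> m"
begin

abbreviation u :: "'a list" where
  "u \<equiv> factor 0 m"

abbreviation occ_pos :: "nat \<Rightarrow> nat" where
  "occ_pos \<equiv> occ X m"

abbreviation ret :: "nat \<Rightarrow> 'a list" where
  "ret \<equiv> ret_word X m"

lemma occurs_at_iff_factor: "occurs_at X m p \<longleftrightarrow> factor p (p + m) = u"
  by (simp add: occurs_at_def list_eq_iff_nth_eq nth_factor)

lemma occurs_at_0: "occurs_at X m 0"
  by (simp add: occurs_at_def)

lemma X_occurrence: "occurs_at X m p \<Longrightarrow> X p = a"
proof -
  assume "occurs_at X m p"
  moreover have "0 < m" using m_pos by simp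
  ultimately have "X (p + 0) = X 0" unfolding occurs_at_def by blast
  then show ?thesis using X_0 by simp
qed

lemma occurs_at_funpow_block_start:
  assumes "occurs_at X m p"
  shows "occurs_at X m ((block_start ^^ k) p)"
proof -
  let ?B = "block_start ^^ k"
  have eq: "factor (?B p) (?B (p + m)) = factor 0 (?B m)"
    using assms funpow_subst_factor(1)[of p "p + m" k] funpow_subst_factor_0[of k m]
    by (simp add: occurs_at_iff_factor)
  have m: "m \<le> ?B m" by (rule le_funpow_block_start)
  then have "m \<le> ?B (p + m) - ?B p" using arg_cong[OF eq, of length] by simp
  then have "factor (?B p) (?B p + m) = take m (factor (?B p) (?B (p + m)))"
    by (rule take_factor[symmetric])
  also have "\<dots> = u" using eq m by (simp add: take_factor_0)
  finally show ?thesis unfolding occurs_at_iff_factor .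
qed

definition gap_bound :: nat where
  "gap_bound = 2 * Max (range (\<lambda>b. length ((subst ^^ (m + k_prim)) [b])))"

text \<open>The block \<tau>^(m+k_prim)(b) of every letter b contains u, so the block following the one
  containing p provides the next occurrence.\<close>
lemma next_occurrence:
  assumes "occurs_at X m p"
  shows "\<exists>q. occurs_at X m q \<and> p < q \<and> q \<le> p + gap_bound"
proof -
  let ?k = "m + k_prim"
  let ?S = "block_start ^^ ?k"
  define C where "C = Max (range (\<lambda>b. length ((subst ^^ ?k) [b])))"
  have C: "length ((subst ^^ ?k) [b]) \<le> C" for b
    unfolding C_def by (rule Max_ge) auto
  obtain i where i: "?S i \<le> p" "p < ?S (Suc i)"
    using strict_mono_interval_cover[OF strict_mono_funpow_block_start funpow_block_start_0] by blast
  obtain v w where vw: "(subst ^^ ?k) [X (Suc i)] = v @ u @ w"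
    using W_factor_of_funpow_subst[of m "X (Suc i)"] factor_0_eq_take_W[of m m] length_W[of m]
    by (metis append.assoc append_take_drop_id le_add1 le_trans)
  define q where "q = ?S (Suc i) + length v"
  have "occurs_at X m q" unfolding occurs_at_def
  proof (intro allI impI)
    fix d assume d: "d < m"
    have "X (q + d) = (subst ^^ ?k) [X (Suc i)] ! (length v + d)"
      unfolding q_def add.assoc using vw d by (intro X_funpow_block_start_add) simp
    also have "\<dots> = X d" using vw d by (simp add: nth_append nth_factor)
    finally show "X (q + d) = X d" .
  qed
  moreover have "?S (Suc i) - ?S i \<le> C" using funpow_subst_single[of ?k i] C[of "X i"] by simp
  moreover have "length v \<le> C" using vw C[of "X (Suc i)"] by (metis le_add1 length_append order_trans)
  ultimately show ?thesis using i unfolding q_def gap_bound_def C_def[symmetric] by (intro exI) auto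
qed

lemma infinite_occurrences: "infinite {p. occurs_at X m p}"
proof
  assume fin: "finite {p. occurs_at X m p}"
  then have "Max {p. occurs_at X m p} \<in> {p. occurs_at X m p}"
    using occurs_at_0 by (intro Max_in) auto
  then obtain q where "occurs_at X m q" "Max {p. occurs_at X m p} < q"
    using next_occurrence by auto
  then show False using fin by (meson Max_ge leD mem_Collect_eq)
qed

lemma occurs_at_occ_pos: "occurs_at X m (occ_pos t)"
  using enumerate_in_set[OF infinite_occurrences] by (simp add: occ_def)

lemma occ_pos_less_iff: "occ_pos t < occ_pos t' \<longleftrightarrow> t < t'"
  using infinite_occurrences by (simp add: occ_def)

lemma occ_pos_le_iff: "occ_pos t \<le> occ_pos t' \<longleftrightarrow> t \<le> t'"
  using infinite_occurrences by (simp add: occ_def)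

lemma strict_mono_occ_pos: "strict_mono occ_pos"
  unfolding strict_mono_def using occ_pos_less_iff by blast

lemma occurrence_eq_occ_pos: "occurs_at X m q \<Longrightarrow> \<exists>t. occ_pos t = q"
  using enumerate_Ex[OF infinite_occurrences] by (simp add: occ_def)

lemma occ_pos_0: "occ_pos 0 = 0"
  unfolding occ_def enumerate_0 using occurs_at_0 by (simp add: Least_eq_0)

lemma occ_pos_Suc_le: "occurs_at X m q \<Longrightarrow> occ_pos t < q \<Longrightarrow> occ_pos (Suc t) \<le> q"
  by (metis Suc_leI occurrence_eq_occ_pos occ_pos_le_iff occ_pos_less_iff)

lemma not_occurs_at_between: "occ_pos t < q \<Longrightarrow> q < occ_pos (Suc t) \<Longrightarrow> \<not> occurs_at X m q"
  using occ_pos_Suc_le by (meson leD)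

lemma occ_pos_Suc_le_gap: "occ_pos (Suc t) \<le> occ_pos t + gap_bound"
  using next_occurrence[OF occurs_at_occ_pos[of t]] occ_pos_Suc_le by (meson order_trans)

lemma ret_eq_factor: "ret t = factor (occ_pos t) (occ_pos (Suc t))"
  by (simp add: ret_word_def factor_def)

lemma length_ret_le: "length (ret t) \<le> gap_bound"
  using occ_pos_Suc_le_gap[of t] by (simp add: ret_eq_factor)

lemma ret_Cons: "\<exists>ys. ret t = a # ys"
proof -
  have "occ_pos t < occ_pos (Suc t)" by (simp add: occ_pos_less_iff)
  then have "ret t = X (occ_pos t) # factor (Suc (occ_pos t)) (occ_pos (Suc t))"
    by (simp add: ret_eq_factor factor_def upt_conv_Cons)
  then show ?thesis using X_occurrence[OF occurs_at_occ_pos] by simp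
qed

lemma finite_range_ret: "finite (range ret)"
proof -
  have "range ret \<subseteq> {w. length w \<le> gap_bound}" using length_ret_le by auto
  then show ?thesis using finite_lists_length_le[of "UNIV :: 'a set" gap_bound] finite_subset by auto
qed

lemma ret_append_u: "ret t @ u = factor (occ_pos t) (occ_pos (Suc t) + m)"
  using factor_append[of "occ_pos t" "occ_pos (Suc t)" "occ_pos (Suc t) + m"]
    occurs_at_occ_pos[of "Suc t"] occ_pos_le_iff[of t "Suc t"]
  by (simp add: ret_eq_factor occurs_at_iff_factor)

lemma nth_ret_append_u: "d < m \<Longrightarrow> (ret t @ u) ! d = X d"
  using occurs_at_occ_pos[of t] occ_pos_le_iff[of t "Suc t"]
  by (simp add: ret_append_u nth_factor occurs_at_def)

abbreviation N :: nat where
  "N \<equiv> num_ret X m"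

abbreviation R :: "nat set" where
  "R \<equiv> {1..N}"

abbreviation \<Theta> :: "nat \<Rightarrow> 'a list" where
  "\<Theta> \<equiv> Theta X m"

lemma inj_on_ret_first_apps: "inj_on ret (first_apps X m)"
proof (rule inj_onI)
  fix k l assume k: "k \<in> first_apps X m" and l: "l \<in> first_apps X m" and eq: "ret k = ret l"
  show "k = l"
  proof (rule ccontr)
    assume "k \<noteq> l"
    then consider "k < l" | "l < k" by linarith
    then show False using k l eq unfolding first_apps_def by cases auto
  qed
qed

lemma ret_image_first_apps: "ret ` first_apps X m = range ret"
proof
  show "range ret \<subseteq> ret ` first_apps X m"
  proof
    fix w assume "w \<in> range ret"
    then obtain t where "ret t = w" by blast
    define k where "k = (LEAST k. ret k = w)"
    have k: "ret k = w" unfolding k_def by (rule LeastI[of _ t]) fact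
    have "\<forall>l<k. ret l \<noteq> ret k" using not_less_Least k unfolding k_def by metis
    then have "k \<in> first_apps X m" unfolding first_apps_def by simp
    then show "w \<in> ret ` first_apps X m" using k by blast
  qed
qed auto

lemma finite_first_apps: "finite (first_apps X m)"
  using finite_imageD[OF _ inj_on_ret_first_apps] ret_image_first_apps finite_range_ret by simp

lemma card_first_apps: "card (first_apps X m) = N"
  using card_image[OF inj_on_ret_first_apps] ret_image_first_apps by (simp add: num_ret_def)

lemma bij_betw_Theta: "bij_betw \<Theta> R (range ret)"
proof -
  let ?fl = "sorted_list_of_set (first_apps X m)"
  have fl: "length ?fl = N" "distinct ?fl" "set ?fl = first_apps X m"
    using finite_first_apps card_first_apps by auto
  have "bij_betw (\<lambda>r. ?fl ! (r - 1)) R (first_apps X m)"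
  proof (rule bij_betw_imageI)
    show "inj_on (\<lambda>r. ?fl ! (r - 1)) R"
      using fl(1,2) by (intro inj_onI) (auto simp: nth_eq_iff_index_eq)
    show "(\<lambda>r. ?fl ! (r - 1)) ` R = first_apps X m"
    proof
      show "(\<lambda>r. ?fl ! (r - 1)) ` R \<subseteq> first_apps X m"
        using fl(1,3) nth_mem[of _ ?fl] by auto
      show "first_apps X m \<subseteq> (\<lambda>r. ?fl ! (r - 1)) ` R"
      proof
        fix k assume "k \<in> first_apps X m"
        then obtain i where "i < N" "?fl ! i = k" using fl by (metis in_set_conv_nth)
        then show "k \<in> (\<lambda>r. ?fl ! (r - 1)) ` R" by (intro image_eqI[of _ _ "Suc i"]) auto
      qed
    qed
  qed
  moreover have "bij_betw ret (first_apps X m) (range ret)"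
    using inj_on_ret_first_apps ret_image_first_apps by (simp add: bij_betw_def)
  ultimately show ?thesis
    using bij_betw_trans unfolding Theta_def comp_def by blast
qed

lemma Theta_in_range_ret: "r \<in> R \<Longrightarrow> \<exists>t. \<Theta> r = ret t"
  using bij_betw_imp_surj_on[OF bij_betw_Theta] by blast

lemma Theta_Cons: "r \<in> R \<Longrightarrow> \<exists>ys. \<Theta> r = a # ys"
proof -
  assume "r \<in> R"
  then obtain t where "\<Theta> r = ret t" using Theta_in_range_ret by blast
  then show ?thesis using ret_Cons[of t] by simp
qed

lemma Theta_nonempty: "r \<in> R \<Longrightarrow> \<Theta> r \<noteq> []"
proof -
  assume "r \<in> R"
  then obtain ys where "\<Theta> r = a # ys" using Theta_Cons by blast
  then show ?thesis by simp
qed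

lemma Theta_inj: "r \<in> R \<Longrightarrow> r' \<in> R \<Longrightarrow> \<Theta> r = \<Theta> r' \<Longrightarrow> r = r'"
  using bij_betw_imp_inj_on[OF bij_betw_Theta] by (rule inj_onD)

definition ret_letter :: "nat \<Rightarrow> nat" where
  "ret_letter t = inv_into R \<Theta> (ret t)"

lemma ret_in_Theta_image: "ret t \<in> \<Theta> ` R"
  using bij_betw_Theta by (simp add: bij_betw_def)

lemma ret_letter_in_R: "ret_letter t \<in> R"
  unfolding ret_letter_def using ret_in_Theta_image by (rule inv_into_into)

lemma Theta_ret_letter: "\<Theta> (ret_letter t) = ret t"
  unfolding ret_letter_def using ret_in_Theta_image by (rule f_inv_into_f)

lemma subst_word_Theta_ret_letters:
  "k \<le> k' \<Longrightarrow> subst_word \<Theta> (map ret_letter [k..<k']) = factor (occ_pos k) (occ_pos k')"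
proof (induction k' rule: dec_induct)
  case (step k')
  then show ?case
    using occ_pos_le_iff[of k k'] occ_pos_le_iff[of k' "Suc k'"]
    by (simp add: Theta_ret_letter ret_eq_factor factor_append)
qed simp

text \<open>No return word is a proper suffix of another: otherwise u would occur strictly inside
  a return word.\<close>
lemma Theta_suffix_eq_Nil:
  assumes r: "r \<in> R" "r' \<in> R" and eq: "\<Theta> r = p @ \<Theta> r'"
  shows "p = []"
proof (rule ccontr)
  assume p: "p \<noteq> []"
  obtain t where t: "\<Theta> r = ret t" using Theta_in_range_ret r(1) by blast
  obtain t' where t': "\<Theta> r' = ret t'" using Theta_in_range_ret r(2) by blast
  define q where "q = occ_pos t + length p"
  have "occ_pos t < q" using p unfolding q_def by simp
  moreover have "length p < length (ret t)" using eq t Theta_nonempty[OF r(2)] by simp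
  then have q_less: "q < occ_pos (Suc t)" unfolding q_def by (simp add: ret_eq_factor)
  moreover have "occurs_at X m q" unfolding occurs_at_def
  proof (intro allI impI)
    fix d assume d: "d < m"
    have "X (q + d) = (ret t @ u) ! (length p + d)"
      using q_less d by (simp add: ret_append_u nth_factor q_def add.assoc)
    also have "\<dots> = (ret t' @ u) ! d" using eq t t' by (simp add: nth_append)
    also have "\<dots> = X d" using nth_ret_append_u d by simp
    finally show "X (q + d) = X d" .
  qed
  ultimately show False using not_occurs_at_between by blast
qed

lemma subst_word_Theta_inj:
  assumes "set ws \<subseteq> R" "set ws' \<subseteq> R" "subst_word \<Theta> ws = subst_word \<Theta> ws'"
  shows "ws = ws'"
  using assms
proof (induction ws arbitrary: ws' rule: rev_induct)
  case Nil
  show ?case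
  proof (cases ws' rule: rev_exhaust)
    case (snoc ys y)
    then have "\<Theta> y \<noteq> []" using Nil.prems(2) Theta_nonempty by simp
    then show ?thesis using Nil.prems(3) snoc by simp
  qed simp
next
  case (snoc r ws)
  have r: "r \<in> R" and ws: "set ws \<subseteq> R" using snoc.prems(1) by simp_all
  show ?case
  proof (cases ws' rule: rev_exhaust)
    case Nil
    then show ?thesis using snoc.prems(3) Theta_nonempty[OF r] by simp
  next
    case (snoc ws0 r')
    have r': "r' \<in> R" and ws0: "set ws0 \<subseteq> R" using snoc.prems(2) snoc by simp_all
    have "subst_word \<Theta> ws @ \<Theta> r = subst_word \<Theta> ws0 @ \<Theta> r'"
      using snoc.prems(3) snoc by simp
    then obtain us where
      "subst_word \<Theta> ws = subst_word \<Theta> ws0 @ us \<and> us @ \<Theta> r = \<Theta> r'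
       \<or> subst_word \<Theta> ws @ us = subst_word \<Theta> ws0 \<and> \<Theta> r = us @ \<Theta> r'"
      using append_eq_append_conv2 by blast
    moreover have "us = []" if "us @ \<Theta> r = \<Theta> r'"
      using Theta_suffix_eq_Nil[OF r' r, of us] that by simp
    moreover have "us = []" if "\<Theta> r = us @ \<Theta> r'"
      using Theta_suffix_eq_Nil[OF r r', of us] that by simp
    ultimately have "\<Theta> r = \<Theta> r'" "subst_word \<Theta> ws = subst_word \<Theta> ws0" by fastforce+
    then have "r = r'" "ws = ws0" using Theta_inj[OF r r'] snoc.IH[OF ws ws0] by simp_all
    then show ?thesis using snoc by simp
  qed
qed

abbreviation \<tau>\<^sub>u :: "nat \<Rightarrow> nat list" where
  "\<tau>\<^sub>u \<equiv> return_subst \<tau> X m"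

text \<open>\<tau> maps the return word between the occurrences p, p' onto X[block_start p, block_start p'),
  which again lies between occurrences and so is a concatenation of return words.\<close>
lemma ex_return_subst:
  assumes r: "r \<in> R"
  shows "\<exists>ws. ws \<noteq> [] \<and> set ws \<subseteq> R \<and> subst_word \<Theta> ws = subst (\<Theta> r)"
proof -
  obtain t where t: "\<Theta> r = ret t" using Theta_in_range_ret r by blast
  have "occurs_at X m (block_start (occ_pos t'))" for t'
    using occurs_at_funpow_block_start[where k = 1, OF occurs_at_occ_pos[of t']] by simp
  then obtain k1 k2 where k1: "occ_pos k1 = block_start (occ_pos t)"
    and k2: "occ_pos k2 = block_start (occ_pos (Suc t))"
    using occurrence_eq_occ_pos by metis
  have "block_start (occ_pos t) < block_start (occ_pos (Suc t))"
    using strict_mono_funpow_block_start[of 1] strict_mono_occ_pos by (simp add: strict_mono_def)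
  then have "k1 < k2" using k1 k2 occ_pos_less_iff by metis
  moreover have "subst (\<Theta> r) = factor (occ_pos k1) (occ_pos k2)"
    using funpow_subst_factor(1)[of "occ_pos t" "occ_pos (Suc t)" 1] t k1 k2 occ_pos_le_iff[of t "Suc t"]
    by (simp add: ret_eq_factor)
  moreover have "set (map ret_letter [k1..<k2]) \<subseteq> R" using ret_letter_in_R by auto
  ultimately show ?thesis
    using subst_word_Theta_ret_letters[of k1 k2] by (intro exI[of _ "map ret_letter [k1..<k2]"]) simp
qed

lemma
  assumes "r \<in> R"
  shows set_return_subst: "set (\<tau>\<^sub>u r) \<subseteq> R"
    and subst_word_Theta_return_subst: "subst_word \<Theta> (\<tau>\<^sub>u r) = subst (\<Theta> r)"
proof -
  let ?P = "\<lambda>ws. ws \<noteq> [] \<and> set ws \<subseteq> R \<and> subst_word \<Theta> ws = subst (\<Theta> r)"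
  obtain ws where ws: "?P ws" using ex_return_subst[OF assms] by blast
  have "?P (THE ws. ?P ws)"
    using subst_word_Theta_inj ws by (intro theI[of ?P ws]) auto
  then show "set (\<tau>\<^sub>u r) \<subseteq> R" "subst_word \<Theta> (\<tau>\<^sub>u r) = subst (\<Theta> r)"
    unfolding return_subst_def by simp_all
qed

lemma set_subst_word_return_subst: "set w \<subseteq> R \<Longrightarrow> set (subst_word \<tau>\<^sub>u w) \<subseteq> R"
proof (induction w)
  case (Cons r w)
  have "r \<in> R" "set w \<subseteq> R" using Cons.prems by simp_all
  then show ?case using Cons.IH set_return_subst[of r] by simp
qed simp

lemma subst_word_Theta_subst_word_return_subst:
  "set w \<subseteq> R \<Longrightarrow> subst_word \<Theta> (subst_word \<tau>\<^sub>u w) = subst (subst_word \<Theta> w)"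
proof (induction w)
  case (Cons r w)
  have "r \<in> R" "set w \<subseteq> R" using Cons.prems by simp_all
  then show ?case using Cons.IH subst_word_Theta_return_subst[of r] by simp
qed simp

lemma set_funpow_return_subst: "set w \<subseteq> R \<Longrightarrow> set ((subst_word \<tau>\<^sub>u ^^ k) w) \<subseteq> R"
proof (induction k)
  case (Suc k)
  then have "set ((subst_word \<tau>\<^sub>u ^^ k) w) \<subseteq> R" by simp
  then show ?case unfolding funpow.simps comp_def by (rule set_subst_word_return_subst)
qed simp

lemma subst_word_Theta_funpow_return_subst:
  "set w \<subseteq> R \<Longrightarrow> subst_word \<Theta> ((subst_word \<tau>\<^sub>u ^^ k) w) = (subst ^^ k) (subst_word \<Theta> w)"
proof (induction k)
  case (Suc k)
  then show ?case
    using subst_word_Theta_subst_word_return_subst[OF set_funpow_return_subst[OF Suc.prems, of k]] by simp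
qed simp

section \<open>Locating return words\<close>

definition ret_at :: "nat \<Rightarrow> nat \<Rightarrow> bool" where
  "ret_at q r \<longleftrightarrow> (\<exists>t. occ_pos t = q \<and> ret_letter t = r)"

lemma window_if_ret_at:
  assumes "ret_at q r"
  shows "(\<forall>d < length (\<Theta> r) + m. X (q + d) = (\<Theta> r @ u) ! d) \<and>
         (\<forall>e. 0 < e \<and> e < length (\<Theta> r) \<longrightarrow> \<not> occurs_at X m (q + e))"
proof (intro conjI allI impI)
  obtain t where t: "occ_pos t = q" "ret_letter t = r" using assms unfolding ret_at_def by blast
  then have th: "\<Theta> r = ret t" using Theta_ret_letter by blast
  have l: "occ_pos t \<le> occ_pos (Suc t)" using occ_pos_le_iff by simp
  {
    fix d assume "d < length (\<Theta> r) + m"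
    then have d: "d < occ_pos (Suc t) + m - occ_pos t" using th l by (simp add: ret_eq_factor)
    have "(\<Theta> r @ u) ! d = factor (occ_pos t) (occ_pos (Suc t) + m) ! d" by (simp only: th ret_append_u)
    also have "\<dots> = X (q + d)" using d t by (simp add: nth_factor)
    finally show "X (q + d) = (\<Theta> r @ u) ! d" by simp
  next
    fix e assume "0 < e \<and> e < length (\<Theta> r)"
    then have "occ_pos t < q + e" "q + e < occ_pos (Suc t)" using th t l by (auto simp: ret_eq_factor)
    then show "\<not> occurs_at X m (q + e)" using not_occurs_at_between by blast
  }
qed

lemma ret_at_if_window:
  assumes r: "r \<in> R"
    and window: "\<forall>d < length (\<Theta> r) + m. X (q + d) = (\<Theta> r @ u) ! d"
    and no_inner: "\<forall>e. 0 < e \<and> e < length (\<Theta> r) \<longrightarrow> \<not> occurs_at X m (q + e)"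
  shows "ret_at q r"
proof -
  let ?L = "length (\<Theta> r)"
  have L: "0 < ?L" using Theta_nonempty r by blast
  obtain t' where t': "\<Theta> r = ret t'" using Theta_in_range_ret r by blast
  have "occurs_at X m q" unfolding occurs_at_def
  proof (intro allI impI)
    fix d assume d: "d < m"
    then have "X (q + d) = (\<Theta> r @ u) ! d" using window by simp
    also have "\<dots> = X d" using t' nth_ret_append_u d by simp
    finally show "X (q + d) = X d" .
  qed
  then obtain t where t: "occ_pos t = q" using occurrence_eq_occ_pos by blast
  have "occurs_at X m (q + ?L)" unfolding occurs_at_def
  proof (intro allI impI)
    fix d assume d: "d < m"
    then have "X (q + ?L + d) = (\<Theta> r @ u) ! (?L + d)" using window by (simp add: add.assoc)
    also have "\<dots> = X d" using d by (simp add: nth_append nth_factor)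
    finally show "X (q + ?L + d) = X d" .
  qed
  then have le1: "occ_pos (Suc t) \<le> q + ?L" using occ_pos_Suc_le t L by simp
  have le2: "q + ?L \<le> occ_pos (Suc t)"
  proof (rule ccontr)
    assume "\<not> q + ?L \<le> occ_pos (Suc t)"
    moreover have "q < occ_pos (Suc t)" using t occ_pos_less_iff[of t "Suc t"] by simp
    ultimately have "0 < occ_pos (Suc t) - q \<and> occ_pos (Suc t) - q < ?L" by simp
    then have "\<not> occurs_at X m (q + (occ_pos (Suc t) - q))" using no_inner by blast
    then show False using occurs_at_occ_pos[of "Suc t"] \<open>q < _\<close> by simp
  qed
  have "ret t = \<Theta> r"
  proof (rule nth_equalityI)
    show "length (ret t) = ?L" using le1 le2 t by (simp add: ret_eq_factor)
    fix d assume "d < length (ret t)"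
    then have d: "d < ?L" using le1 le2 t by (simp add: ret_eq_factor)
    then have "ret t ! d = X (q + d)" using le1 le2 t by (simp add: ret_eq_factor nth_factor)
    also have "\<dots> = \<Theta> r ! d" using window d by (simp add: nth_append)
    finally show "ret t ! d = \<Theta> r ! d" .
  qed
  then have "ret_letter t = r" using Theta_inj[OF ret_letter_in_R r] Theta_ret_letter by simp
  then show "ret_at q r" using t unfolding ret_at_def by blast
qed

lemma ret_at_iff:
  assumes "r \<in> R"
  shows "ret_at q r \<longleftrightarrow> (\<forall>d < length (\<Theta> r) + m. X (q + d) = (\<Theta> r @ u) ! d) \<and>
                         (\<forall>e. 0 < e \<and> e < length (\<Theta> r) \<longrightarrow> \<not> occurs_at X m (q + e))"
  using window_if_ret_at ret_at_if_window[OF assms] by blast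

lemma count_ret_letters:
  assumes "k \<le> k'"
  shows "count_list (map ret_letter [k..<k']) r = card {q. occ_pos k \<le> q \<and> q < occ_pos k' \<and> ret_at q r}"
proof -
  have "{q. occ_pos k \<le> q \<and> q < occ_pos k' \<and> ret_at q r} = occ_pos ` {t\<in>{k..<k'}. ret_letter t = r}"
    unfolding ret_at_def using occ_pos_le_iff occ_pos_less_iff by auto
  moreover have "inj_on occ_pos {t\<in>{k..<k'}. ret_letter t = r}"
    using strict_mono_occ_pos strict_mono_imp_inj_on inj_on_subset by blast
  ultimately show ?thesis by (simp add: card_image count_list_map_upt)
qed

definition k_local :: nat where
  "k_local = gap_bound + m + k_prim"

abbreviation block :: "'a \<Rightarrow> 'a list" where
  "block b \<equiv> (subst ^^ k_local) [b]"

lemma length_block: "gap_bound + m + 1 \<le> length (block b)"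
  unfolding k_local_def by (rule length_funpow_subst_ge)

definition ret_at_in :: "'a list \<Rightarrow> nat \<Rightarrow> nat \<Rightarrow> bool" where
  "ret_at_in w q r \<longleftrightarrow> (\<forall>d < length (\<Theta> r) + m. w ! (q + d) = (\<Theta> r @ u) ! d) \<and>
                         (\<forall>e. 0 < e \<and> e < length (\<Theta> r) \<longrightarrow> \<not> (\<forall>d<m. w ! (q + e + d) = u ! d))"

definition local_ret_count :: "'a \<times> 'a \<Rightarrow> nat \<Rightarrow> nat" where
  "local_ret_count bc r = card {t. t < length (block (fst bc)) \<and> ret_at_in (block (fst bc) @ block (snd bc)) t r}"

text \<open>Blocks are longer than any return word plus u, so a window starting in the block of X i
  lies inside the blocks of X i and X (i+1).\<close>
lemma ret_at_block_iff:
  assumes r: "r \<in> R" and t: "t < length (block (X i))"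
  shows "ret_at ((block_start ^^ k_local) i + t) r \<longleftrightarrow> ret_at_in (block (X i) @ block (X (Suc i))) t r"
proof -
  let ?B = "block_start ^^ k_local"
  let ?w = "block (X i) @ block (X (Suc i))"
  have "?w = factor (?B i) (?B (Suc (Suc i)))"
    using funpow_subst_single[of k_local i] funpow_subst_single[of k_local "Suc i"]
      strict_mono_funpow_block_start[of k_local]
    by (simp add: factor_append strict_mono_less_eq)
  then have nth_w: "?w ! e = X (?B i + e)" if "e < length ?w" for e
    using that by (simp add: nth_factor)
  obtain t' where "\<Theta> r = ret t'" using Theta_in_range_ret[OF r] by blast
  then have "length (\<Theta> r) + m < length (block (X (Suc i)))"
    using length_ret_le[of t'] length_block[of "X (Suc i)"] by simp
  then have in_w: "t + e < length ?w" if "e < length (\<Theta> r) + m" for e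
    using t that by simp
  have window: "(\<forall>d < length (\<Theta> r) + m. X (?B i + t + d) = (\<Theta> r @ u) ! d) \<longleftrightarrow>
      (\<forall>d < length (\<Theta> r) + m. ?w ! (t + d) = (\<Theta> r @ u) ! d)"
    using nth_w in_w by (simp add: add.assoc)
  have inner: "occurs_at X m (?B i + t + e) \<longleftrightarrow> (\<forall>d<m. ?w ! (t + e + d) = u ! d)"
    if e: "e < length (\<Theta> r)" for e
  proof -
    have "t + e + d < length ?w" if "d < m" for d
      using in_w[of "e + d"] e that by (simp add: add.assoc)
    then show ?thesis unfolding occurs_at_def using nth_w by (simp add: nth_factor add.assoc)
  qed
  show ?thesis unfolding ret_at_iff[OF r] ret_at_in_def using window inner by auto
qed

lemma card_ret_at_block:
  assumes r: "r \<in> R"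
  shows "card {q. (block_start ^^ k_local) i \<le> q \<and> q < (block_start ^^ k_local) (Suc i) \<and> ret_at q r}
    = local_ret_count (X i, X (Suc i)) r"
proof -
  let ?B = "block_start ^^ k_local"
  let ?T = "{t. t < length (block (X i)) \<and> ret_at_in (block (X i) @ block (X (Suc i))) t r}"
  have len: "length (block (X i)) = ?B (Suc i) - ?B i"
    by (simp add: funpow_subst_single)
  have "{q. ?B i \<le> q \<and> q < ?B (Suc i) \<and> ret_at q r} = (\<lambda>t. ?B i + t) ` ?T"
  proof (intro equalityI subsetI)
    fix q assume "q \<in> {q. ?B i \<le> q \<and> q < ?B (Suc i) \<and> ret_at q r}"
    then have q: "?B i \<le> q" "q < ?B (Suc i)" "ret_at q r" by simp_all
    then have "q - ?B i \<in> ?T" using ret_at_block_iff[OF r, of "q - ?B i" i] len by simp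
    then show "q \<in> (\<lambda>t. ?B i + t) ` ?T" using q(1) by (intro image_eqI[of _ _ "q - ?B i"]) simp_all
  next
    fix q assume "q \<in> (\<lambda>t. ?B i + t) ` ?T"
    then obtain t where "t \<in> ?T" "q = ?B i + t" by blast
    then show "q \<in> {q. ?B i \<le> q \<and> q < ?B (Suc i) \<and> ret_at q r}"
      using ret_at_block_iff[OF r, of t i] len by (simp add: less_diff_conv add.commute)
  qed
  then show ?thesis unfolding local_ret_count_def by (simp add: card_image)
qed

lemma bigrams_factor:
  assumes "i < j"
  shows "bigrams (factor i j) (X j) = map (\<lambda>k. (X k, X (Suc k))) [i..<j]"
proof (rule nth_equalityI)
  show "length (bigrams (factor i j) (X j)) = length (map (\<lambda>k. (X k, X (Suc k))) [i..<j])"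
    using assms by (simp add: bigrams_def)
  fix k assume "k < length (bigrams (factor i j) (X j))"
  then have k: "k < j - i" using assms by (simp add: bigrams_def)
  have "(tl (factor i j) @ [X j]) ! k = X (Suc (i + k))"
  proof (cases "k < j - i - 1")
    case False
    then have "Suc (i + k) = j" using k by linarith
    then show ?thesis using k False by (simp add: nth_append)
  qed (simp add: nth_append nth_tl nth_factor)
  then show "bigrams (factor i j) (X j) ! k = map (\<lambda>k. (X k, X (Suc k))) [i..<j] ! k"
    using k by (simp add: bigrams_def nth_factor)
qed

lemma count_funpow_return_subst:
  assumes j: "j \<in> R" and r: "r \<in> R"
  shows "count_list ((subst_word \<tau>\<^sub>u ^^ k_local) [j]) r
    = sum_list (map (\<lambda>q. local_ret_count q r) (bigrams (\<Theta> j) a))"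
proof -
  let ?B = "block_start ^^ k_local"
  obtain t where t: "\<Theta> j = ret t" using Theta_in_range_ret j by blast
  have lt: "occ_pos t < occ_pos (Suc t)" by (simp add: occ_pos_less_iff)
  obtain k1 k2 where k1: "occ_pos k1 = ?B (occ_pos t)" and k2: "occ_pos k2 = ?B (occ_pos (Suc t))"
    using occurs_at_funpow_block_start[OF occurs_at_occ_pos] occurrence_eq_occ_pos by metis
  have "?B (occ_pos t) \<le> ?B (occ_pos (Suc t))"
    using funpow_subst_factor(2) lt by simp
  then have k12: "k1 \<le> k2" using k1 k2 occ_pos_le_iff by metis
  have "subst_word \<Theta> ((subst_word \<tau>\<^sub>u ^^ k_local) [j]) = (subst ^^ k_local) (\<Theta> j)"
    using subst_word_Theta_funpow_return_subst[of "[j]" k_local] j by simp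
  also have "\<dots> = factor (occ_pos k1) (occ_pos k2)"
    using t k1 k2 funpow_subst_factor(1) lt by (simp add: ret_eq_factor)
  also have "\<dots> = subst_word \<Theta> (map ret_letter [k1..<k2])"
    using subst_word_Theta_ret_letters[OF k12] by simp
  finally have eq: "subst_word \<Theta> ((subst_word \<tau>\<^sub>u ^^ k_local) [j]) = subst_word \<Theta> (map ret_letter [k1..<k2])" .
  have "set [j] \<subseteq> R" using j by simp
  moreover have "set (map ret_letter [k1..<k2]) \<subseteq> R"
    unfolding set_map by (rule image_subsetI) (rule ret_letter_in_R)
  ultimately have "(subst_word \<tau>\<^sub>u ^^ k_local) [j] = map ret_letter [k1..<k2]"
    using subst_word_Theta_inj[OF set_funpow_return_subst _ eq] by blast
  then have "count_list ((subst_word \<tau>\<^sub>u ^^ k_local) [j]) r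
      = card {q. ?B (occ_pos t) \<le> q \<and> q < ?B (occ_pos (Suc t)) \<and> ret_at q r}"
    using count_ret_letters[OF k12] k1 k2 by simp
  also have "\<dots> = (\<Sum>i\<in>{occ_pos t..<occ_pos (Suc t)}. card {q. ?B i \<le> q \<and> q < ?B (Suc i) \<and> ret_at q r})"
    using strict_mono_funpow_block_start lt
    by (intro card_split_mono_intervals) (auto intro: strict_mono_mono)
  also have "\<dots> = sum_list (map (\<lambda>i. local_ret_count (X i, X (Suc i)) r) [occ_pos t..<occ_pos (Suc t)])"
    using card_ret_at_block[OF r] by (simp add: sum_set_upt_conv_sum_list_nat[symmetric])
  also have "\<dots> = sum_list (map (\<lambda>q. local_ret_count q r) (bigrams (\<Theta> j) a))"
    using bigrams_factor[OF lt] X_occurrence[OF occurs_at_occ_pos[of "Suc t"]] t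
    by (simp add: ret_eq_factor comp_def)
  finally show ?thesis .
qed

section \<open>Transfer of eigenvalues\<close>

lemma sum_list_subst_word_Theta:
  "sum_list (map f (subst_word \<Theta> ws)) = sum_list (map (\<lambda>r. sum_list (map f (\<Theta> r))) ws)"
  by (induction ws) auto

text \<open>If the f-weights of all return words vanish, the f-weight F of the prefix X[0,i) vanishes
  at every occurrence of u, so F takes finitely many values; as \<tau> multiplies it by z, F = 0.\<close>
lemma left_eigenvector_eq_0_if_Theta_weights_eq_0:
  assumes z: "z \<noteq> 0" "\<not> root_of_unity z"
    and f_eigen: "\<And>j. (\<Sum>i\<in>UNIV. f i * of_nat (subst_matrix \<tau> i j)) = z * f j"
    and weights: "\<And>r. r \<in> R \<Longrightarrow> sum_list (map f (\<Theta> r)) = 0"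
  shows "f b = 0"
proof -
  define F where "F i = sum_list (map f (factor 0 i))" for i
  have F_occ_pos: "F (occ_pos t) = 0" for t
  proof -
    have "F (occ_pos t) = sum_list (map f (subst_word \<Theta> (map ret_letter [0..<t])))"
      unfolding F_def using subst_word_Theta_ret_letters[of 0 t] occ_pos_0 by simp
    also have "\<dots> = 0"
      using weights[OF ret_letter_in_R] by (simp add: sum_list_subst_word_Theta comp_def)
    finally show ?thesis .
  qed
  define V where "V = (\<lambda>w. sum_list (map f w)) ` {w. length w \<le> gap_bound}"
  have "finite V" unfolding V_def using finite_lists_length_le[of "UNIV :: 'a set" gap_bound] by simp
  moreover have "F i \<in> V" for i
  proof -
    obtain t where t: "occ_pos t \<le> i" "i < occ_pos (Suc t)"
      using strict_mono_interval_cover[OF strict_mono_occ_pos occ_pos_0] by blast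
    then have "factor 0 i = factor 0 (occ_pos t) @ factor (occ_pos t) i" by (simp add: factor_append)
    then have "F i = sum_list (map f (factor (occ_pos t) i))" using F_occ_pos[of t] by (simp add: F_def)
    moreover have "length (factor (occ_pos t) i) \<le> gap_bound" using t occ_pos_Suc_le_gap[of t] by simp
    ultimately show ?thesis unfolding V_def by blast
  qed
  moreover have "F ((block_start ^^ n) i) = z ^ n * F i" for n i
  proof (induction n)
    case (Suc n)
    have "F ((block_start ^^ Suc n) i) = sum_list (map f (subst ((subst ^^ n) (factor 0 i))))"
      unfolding F_def using funpow_subst_factor_0[of "Suc n" i] by simp
    also have "\<dots> = z * F ((block_start ^^ n) i)"
      unfolding F_def using sum_list_subst_word_left_eigenvector[OF f_eigen] funpow_subst_factor_0 by simp
    finally show ?case using Suc by simp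
  qed (simp add: F_def)
  ultimately have F_0: "F i = 0" for i
    using power_mult_in_finite_set_imp_zero[OF _ _ z] by metis
  obtain i where "X i = b" using X_surj by blast
  moreover have "factor 0 (Suc i) = factor 0 i @ [X i]"
    using factor_append[of 0 i "Suc i"] by (simp add: factor_Suc)
  then have "F (Suc i) = F i + f (X i)" unfolding F_def by simp
  ultimately show ?thesis using F_0 by simp
qed

lemma is_eigenvalue_return_subst_if_is_eigenvalue:
  assumes z: "z \<noteq> 0" "\<not> root_of_unity z"
    and eigen: "is_eigenvalue UNIV (subst_matrix \<tau>) z"
  shows "is_eigenvalue R (subst_matrix \<tau>\<^sub>u) z"
proof -
  have "\<exists>f. (\<exists>i. f i \<noteq> 0) \<and> (\<forall>j. (\<Sum>i\<in>UNIV. f i * of_nat (subst_matrix \<tau> i j)) = z * f j)"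
    using eigen is_eigenvalue_iff_left_eigenvector[of UNIV "subst_matrix \<tau>" z] by simp
  then obtain f where f_nonzero: "\<exists>i. f i \<noteq> 0"
    and f_eigen: "\<And>j. (\<Sum>i\<in>UNIV. f i * of_nat (subst_matrix \<tau> i j)) = z * f j"
    by blast
  define g where "g = (\<lambda>r. sum_list (map f (\<Theta> r)))"
  have "(\<Sum>r\<in>R. g r * of_nat (subst_matrix \<tau>\<^sub>u r j)) = z * g j" if j: "j \<in> R" for j
  proof -
    have "(\<Sum>r\<in>R. g r * of_nat (subst_matrix \<tau>\<^sub>u r j)) = sum_list (map g (\<tau>\<^sub>u j))"
      using sum_list_map_eq_sum_of_nat_count[of R "\<tau>\<^sub>u j" g] set_return_subst[OF j]
      by (simp add: subst_matrix_def mult.commute)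
    also have "\<dots> = sum_list (map f (subst (\<Theta> j)))"
      using subst_word_Theta_return_subst[OF j] sum_list_subst_word_Theta[of f "\<tau>\<^sub>u j"]
      by (simp add: g_def)
    also have "\<dots> = z * g j" unfolding g_def by (rule sum_list_subst_word_left_eigenvector[OF f_eigen])
    finally show ?thesis .
  qed
  moreover have "\<exists>r\<in>R. g r \<noteq> 0"
    using left_eigenvector_eq_0_if_Theta_weights_eq_0[OF z f_eigen] f_nonzero unfolding g_def by blast
  ultimately show ?thesis using is_eigenvalue_iff_left_eigenvector[of R] by auto
qed

lemma weighted_count_Theta_eigen:
  assumes eigen: "\<And>i. i \<in> R \<Longrightarrow> weighted_count R v \<tau>\<^sub>u i = z * v i"
  shows "weighted_count UNIV (weighted_count R v \<Theta>) \<tau> c = z * weighted_count R v \<Theta> c"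
proof -
  have "weighted_count UNIV (weighted_count R v \<Theta>) \<tau> c
      = (\<Sum>b\<in>UNIV. of_nat (count_list (\<tau> b) c) * weighted_count R v \<Theta> b)"
    by (simp add: weighted_count_def)
  also have "\<dots> = weighted_count R v (\<lambda>j. subst (\<Theta> j)) c"
    by (simp add: weighted_count_concat_map subst_word_def)
  also have "\<dots> = weighted_count R v (\<lambda>j. concat (map \<Theta> (\<tau>\<^sub>u j))) c"
  proof (rule weighted_count_cong)
    fix j assume "j \<in> R"
    then show "subst (\<Theta> j) = concat (map \<Theta> (\<tau>\<^sub>u j))"
      using subst_word_Theta_return_subst by (simp add: subst_word_def)
  qed
  also have "\<dots> = z * weighted_count R v \<Theta> c"
    using set_return_subst eigen by (intro weighted_count_compose_eigenvector) auto
  finally show ?thesis .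
qed

text \<open>\<tau> maps a bigram (b, c) to the bigrams inside \<tau>(b), whose counts are letter counts and vanish,
  and the single bigram (last \<tau>(b), first \<tau>(c)) across the boundary.\<close>
lemma weighted_count_bigrams_pushforward:
  assumes eigen: "\<And>i. i \<in> R \<Longrightarrow> weighted_count R v \<tau>\<^sub>u i = z * v i"
    and letters_zero: "\<And>b. weighted_count R v \<Theta> b = 0"
  shows "z * weighted_count R v (\<lambda>j. bigrams (\<Theta> j) a) p
    = (\<Sum>q | (last (\<tau> (fst q)), hd (\<tau> (snd q))) = p. weighted_count R v (\<lambda>j. bigrams (\<Theta> j) a) q)"
proof -
  define \<sigma> where "\<sigma> q = (last (\<tau> (fst q)), hd (\<tau> (snd q)))" for q :: "'a \<times> 'a"
  define inner where "inner b = zip (butlast (\<tau> b)) (tl (\<tau> b))" for b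
  have "z * weighted_count R v (\<lambda>j. bigrams (\<Theta> j) a) p
      = weighted_count R v (\<lambda>j. concat (map (\<lambda>r. bigrams (\<Theta> r) a) (\<tau>\<^sub>u j))) p"
    using set_return_subst eigen by (intro weighted_count_compose_eigenvector[symmetric]) auto
  also have "\<dots> = weighted_count R v (\<lambda>j. concat (map (\<lambda>q. inner (fst q) @ [\<sigma> q]) (bigrams (\<Theta> j) a))) p"
  proof (rule weighted_count_cong)
    fix j assume j: "j \<in> R"
    have "\<forall>r\<in>set (\<tau>\<^sub>u j). \<exists>ys. \<Theta> r = a # ys" using set_return_subst[OF j] Theta_Cons by blast
    then have "concat (map (\<lambda>r. bigrams (\<Theta> r) a) (\<tau>\<^sub>u j)) = bigrams (subst_word \<Theta> (\<tau>\<^sub>u j)) a"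
      by (simp add: bigrams_concat subst_word_def)
    also have "\<dots> = bigrams (subst (\<Theta> j)) (hd (\<tau> a))"
      using subst_word_Theta_return_subst[OF j] starts by simp
    also have "\<dots> = concat (map (\<lambda>q. inner (fst q) @ [\<sigma> q]) (bigrams (\<Theta> j) a))"
      using nonerasing by (simp add: bigrams_subst_word bigrams_snoc inner_def \<sigma>_def)
    finally show "concat (map (\<lambda>r. bigrams (\<Theta> r) a) (\<tau>\<^sub>u j))
        = concat (map (\<lambda>q. inner (fst q) @ [\<sigma> q]) (bigrams (\<Theta> j) a))" .
  qed
  also have "\<dots> = weighted_count R v (\<lambda>j. concat (map inner (\<Theta> j)) @ map \<sigma> (bigrams (\<Theta> j) a)) p"
    by (rule weighted_count_cong_count) (simp add: count_list_concat_map_snoc map_fst_bigrams)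
  also have "\<dots> = weighted_count R v (\<lambda>j. concat (map inner (\<Theta> j))) p
      + weighted_count R v (\<lambda>j. map \<sigma> (bigrams (\<Theta> j) a)) p"
    by (rule weighted_count_append)
  also have "weighted_count R v (\<lambda>j. concat (map inner (\<Theta> j))) p = 0"
    unfolding weighted_count_concat_map letters_zero by simp
  also have "weighted_count R v (\<lambda>j. map \<sigma> (bigrams (\<Theta> j) a)) p
      = (\<Sum>q | \<sigma> q = p. weighted_count R v (\<lambda>j. bigrams (\<Theta> j) a) q)"
    by (rule weighted_count_map)
  finally show ?thesis unfolding \<sigma>_def by simp
qed

lemma weighted_count_funpow_return_subst:
  assumes eigen: "\<And>i. i \<in> R \<Longrightarrow> weighted_count R v \<tau>\<^sub>u i = z * v i" and r: "r \<in> R"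
  shows "weighted_count R v (\<lambda>j. (subst_word \<tau>\<^sub>u ^^ k) [j]) r = z ^ k * v r"
proof (induction k)
  case 0
  have "weighted_count R v (\<lambda>j. [j]) r = (\<Sum>j\<in>R. if j = r then v j else 0)"
    unfolding weighted_count_def by (intro sum.cong) auto
  then show ?case using r by simp
next
  case (Suc k)
  have "weighted_count R v (\<lambda>j. (subst_word \<tau>\<^sub>u ^^ Suc k) [j]) r
      = weighted_count R v (\<lambda>j. concat (map (\<lambda>r. (subst_word \<tau>\<^sub>u ^^ k) [r]) (\<tau>\<^sub>u j))) r"
    unfolding funpow_subst_word_Suc_single by (subst funpow_subst_word) (simp add: subst_word_def)
  also have "\<dots> = z * weighted_count R v (\<lambda>j. (subst_word \<tau>\<^sub>u ^^ k) [j]) r"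
    using set_return_subst eigen by (intro weighted_count_compose_eigenvector) auto
  finally show ?case using Suc by simp
qed

lemma is_eigenvalue_if_is_eigenvalue_return_subst:
  assumes z: "z \<noteq> 0" "\<not> root_of_unity z"
    and eigen_u: "is_eigenvalue R (subst_matrix \<tau>\<^sub>u) z"
  shows "is_eigenvalue UNIV (subst_matrix \<tau>) z"
proof (rule ccontr)
  assume not_eigen: "\<not> is_eigenvalue UNIV (subst_matrix \<tau>) z"
  obtain v where v_nonzero: "\<exists>r\<in>R. v r \<noteq> 0" and eigen: "\<And>i. i \<in> R \<Longrightarrow> weighted_count R v \<tau>\<^sub>u i = z * v i"
    using eigen_u unfolding is_eigenvalue_subst_matrix_iff by blast
  have letters_zero: "weighted_count R v \<Theta> b = 0" for b
    using weighted_count_Theta_eigen[OF eigen] not_eigen unfolding is_eigenvalue_subst_matrix_iff by blast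
  have bigrams_zero: "weighted_count R v (\<lambda>j. bigrams (\<Theta> j) a) q = 0" for q
    using weighted_count_bigrams_pushforward[OF eigen letters_zero] z by (rule pushforward_eigenvector_eq_0)
  have "v r = 0" if r: "r \<in> R" for r
  proof -
    have "z ^ k_local * v r = weighted_count R v (\<lambda>j. (subst_word \<tau>\<^sub>u ^^ k_local) [j]) r"
      using weighted_count_funpow_return_subst[OF eigen r] by simp
    also have "\<dots> = (\<Sum>q\<in>UNIV. of_nat (local_ret_count q r) * weighted_count R v (\<lambda>j. bigrams (\<Theta> j) a) q)"
    proof (rule weighted_count_linear)
      fix j assume "j \<in> R"
      then show "count_list ((subst_word \<tau>\<^sub>u ^^ k_local) [j]) r
          = (\<Sum>q\<in>UNIV. count_list (bigrams (\<Theta> j) a) q * local_ret_count q r)"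
        using count_funpow_return_subst[OF _ r]
          sum_list_map_eq_sum_of_nat_count[of UNIV "bigrams (\<Theta> j) a" "\<lambda>q. local_ret_count q r"]
        by simp
    qed
    also have "\<dots> = 0" using bigrams_zero by simp
    finally show ?thesis using z(1) by simp
  qed
  then show False using v_nonzero by blast
qed

end

theorem proposition10:
  fixes \<tau> :: "'a::finite \<Rightarrow> 'a list" and a :: 'a and m :: nat and z :: complex
  assumes nonerasing: "\<forall>b. \<tau> b \<noteq> []"
    and starts: "hd (\<tau> a) = a"
    and growing: "2 \<le> length (\<tau> a)"
    and prim: "primitive_mat UNIV (subst_matrix \<tau>)"
    and m_pos: "1 \<le> m"
    and nz: "z \<noteq> 0"
    and nru: "\<not> root_of_unity z"
  shows "is_eigenvalue UNIV (subst_matrix \<tau>) z \<longleftrightarrow>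
         is_eigenvalue {1..num_ret (fixpt \<tau> a) m}
           (subst_matrix (return_subst \<tau> (fixpt \<tau> a) m)) z"
proof -
  interpret prefix_return_words \<tau> a m
    using nonerasing starts growing prim m_pos by unfold_locales
  show ?thesis
    using is_eigenvalue_return_subst_if_is_eigenvalue[OF nz nru]
      is_eigenvalue_if_is_eigenvalue_return_subst[OF nz nru] by blast
qed

end
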